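(* Let $k\ge3$, $q=p^e$, and let $S(k,q)=S(k,q;f_3,g_3,\ldots,f_k,g_k)$ where each $g_i$ has zero constant term and $1\le d_g<p$. If at least one of the following two conditions holds, then $S(k,q)$ is connected: (1) the polynomials $1,X,f_3,\ldots,f_k$ are $\mathbb{F}_q$-linearly independent and each $g_i$, $3\le i\le k$, has a nonzero coefficient of $X$; (2) the polynomials $f_3,\ldots,f_k$ are $\mathbb{F}_q$-linearly independent and there exists $j$ with $2\le j\le d_g$ such that each $g_i$, $3\le i\le k$, has a nonzero coefficient of $X^j$.
   Context: For $k\ge3$ and polynomials $f_i,g_i\in\mathbb{F}_q[X]$ ($3\le i\le k$) of degree at most $q-1$ with $g_i(-X)=-g_i(X)$, $S(k,q;f_3,g_3,\ldots,f_k,g_k)$ is the simple graph on vertex set $\mathbb{F}_q^k$ in which $a=(a_1,\ldots,a_k)$ and $b=(b_1,\ldots,b_k)$ are adjacent iff $a_1\ne b_1$ and $b_i-a_i=g_i(b_1-a_1)f_i\!\left(\frac{b_2-a_2}{b_1-a_1}\right)$ for $3\le i\le k$. $d_g=\max_{3\le i\le k}\deg g_i$. *)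

theory Defs
  imports "HOL-Computational_Algebra.Polynomial" "HOL-Computational_Algebra.Primes" "HOL-Library.Cardinality"
begin

text \<open>Vertices of S(k,q): points of F_q^k, represented as functions with 1-based
indices 1..k (value 0 outside).\<close>
definition S_vertices :: "nat \<Rightarrow> (nat \<Rightarrow> 'a::zero) set" where
  "S_vertices k = {v. \<forall>i. (i < 1 \<or> k < i) \<longrightarrow> v i = 0}"

definition S_adj :: "nat \<Rightarrow> (nat \<Rightarrow> 'a::field poly) \<Rightarrow> (nat \<Rightarrow> 'a poly)
    \<Rightarrow> (nat \<Rightarrow> 'a) \<Rightarrow> (nat \<Rightarrow> 'a) \<Rightarrow> bool" where
  "S_adj k f g a b \<longleftrightarrow> a 1 \<noteq> b 1 \<and>
     (\<forall>i\<in>{3..k}. b i - a i = poly (g i) (b 1 - a 1) * poly (f i) ((b 2 - a 2) / (b 1 - a 1)))"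

definition S_connected :: "nat \<Rightarrow> (nat \<Rightarrow> 'a::field poly) \<Rightarrow> (nat \<Rightarrow> 'a poly) \<Rightarrow> bool" where
  "S_connected k f g \<longleftrightarrow>
     (\<forall>a\<in>S_vertices k. \<forall>b\<in>S_vertices k.
        (\<lambda>x y. x \<in> S_vertices k \<and> y \<in> S_vertices k \<and> S_adj k f g x y)\<^sup>*\<^sup>* a b)"

definition d_g :: "nat \<Rightarrow> (nat \<Rightarrow> 'a::zero poly) \<Rightarrow> nat" where
  "d_g k g = Max ((\<lambda>i. degree (g i)) ` {3..k})"

definition lin_indep_1_X_f :: "nat \<Rightarrow> (nat \<Rightarrow> 'a::field poly) \<Rightarrow> bool" where
  "lin_indep_1_X_f k f \<longleftrightarrow>
     (\<forall>c0 c1 (c :: nat \<Rightarrow> 'a).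
        smult c0 1 + smult c1 [:0, 1:] + (\<Sum>i\<in>{3..k}. smult (c i) (f i)) = 0 \<longrightarrow>
        c0 = 0 \<and> c1 = 0 \<and> (\<forall>i\<in>{3..k}. c i = 0))"

definition lin_indep_f :: "nat \<Rightarrow> (nat \<Rightarrow> 'a::field poly) \<Rightarrow> bool" where
  "lin_indep_f k f \<longleftrightarrow>
     (\<forall>c :: nat \<Rightarrow> 'a. (\<Sum>i\<in>{3..k}. smult (c i) (f i)) = 0 \<longrightarrow> (\<forall>i\<in>{3..k}. c i = 0))"

end

(*
  Adjacency in S(k,q) depends only on the difference b - a, so the translations t for which
  every vertex a is joined to a + t by a path form an additive subgroup M of F_q^k, and the
  graph is connected iff M is everything.  M contains every step (c, cu, g_i(c) f_i(u)).
  Expanding the step at multiples n c (n = 0, 1, 2, ...) as a polynomial in n, iterated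
  finite differences, which only divide by factorials below d_g < p, put each of its
  coefficients c^j w_j(u) into M; a binomial expansion of (n + c)^j then shows that M
  contains the whole line F_q w_j(u).  So M contains the span of the vectors w_j(u), which is
  all of F_q^k because no nonzero linear functional kills w_1(u) (resp. w_1(u) and w_j(u)) for
  all u: such a functional yields a combination of 1, X, f_3, ..., f_k of degree < q
  vanishing on F_q, hence the zero polynomial.
*)
theory Submission
  imports Defs "HOL-Library.Function_Algebras"
begin

fun forward_diff :: "nat \<Rightarrow> (nat \<Rightarrow> 'a::ab_group_add) \<Rightarrow> nat \<Rightarrow> 'a" where
  "forward_diff 0 h = h"
| "forward_diff (Suc d) h = forward_diff d (\<lambda>t. h (Suc t) - h t)"

lemma forward_diff_sum:
  fixes c :: "'j \<Rightarrow> 'a::comm_ring_1"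
  assumes "finite J"
  shows "forward_diff d (\<lambda>t. \<Sum>j\<in>J. c j * F j t) t = (\<Sum>j\<in>J. c j * forward_diff d (F j) t)"
proof (induction d arbitrary: F t)
  case (Suc d)
  have "forward_diff (Suc d) (\<lambda>t. \<Sum>j\<in>J. c j * F j t) t
      = forward_diff d (\<lambda>t. \<Sum>j\<in>J. c j * (F j (Suc t) - F j t)) t"
    by (simp add: sum_subtractf right_diff_distrib)
  also have "\<dots> = (\<Sum>j\<in>J. c j * forward_diff d (\<lambda>t. F j (Suc t) - F j t) t)"
    by (rule Suc)
  finally show ?case by simp
qed simp

lemma forward_diff_power:
  "i \<le> d \<Longrightarrow> forward_diff d (\<lambda>t. of_nat t ^ i :: 'a::comm_ring_1) t = (if i = d then of_nat (fact d) else 0)"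
proof (induction d arbitrary: i t)
  case (Suc d)
  have step: "(of_nat (Suc t) :: 'a) ^ i - of_nat t ^ i = (\<Sum>m<i. of_nat (i choose m) * of_nat t ^ m)" for t
  proof -
    have "(of_nat (Suc t) :: 'a) ^ i = (of_nat t + 1) ^ i"
      by (simp add: add.commute)
    also have "\<dots> = (\<Sum>m\<le>i. of_nat (i choose m) * of_nat t ^ m)"
      by (simp add: binomial_ring)
    finally have "(of_nat (Suc t) :: 'a) ^ i = (\<Sum>m\<le>i. of_nat (i choose m) * of_nat t ^ m)" .
    then show ?thesis by (simp add: lessThan_Suc_atMost[symmetric])
  qed
  have "forward_diff (Suc d) (\<lambda>t. of_nat t ^ i :: 'a) t
      = forward_diff d (\<lambda>t. \<Sum>m<i. of_nat (i choose m) * of_nat t ^ m) t"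
    by (simp only: forward_diff.simps step)
  also have "\<dots> = (\<Sum>m<i. of_nat (i choose m) * forward_diff d (\<lambda>t. of_nat t ^ m :: 'a) t)"
    by (rule forward_diff_sum) simp
  also have "\<dots> = (\<Sum>m<i. of_nat (i choose m) * (if m = d then of_nat (fact d) else 0))"
    using Suc by (intro sum.cong refl) simp
  also have "\<dots> = (if i = Suc d then of_nat (fact (Suc d)) else 0)"
    using Suc.prems by (cases "i = Suc d") (simp_all add: if_distrib sum.delta algebra_simps)
  finally show ?case .
qed simp

lemma forward_diff_poly:
  "forward_diff N (\<lambda>t. \<Sum>j\<le>N. of_nat t ^ j * (a j :: 'a::comm_ring_1)) t = of_nat (fact N) * a N"
proof -
  have "forward_diff N (\<lambda>t. \<Sum>j\<le>N. a j * of_nat t ^ j) t = (\<Sum>j\<le>N. a j * (if j = N then of_nat (fact N) else 0))"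
    by (subst forward_diff_sum) (simp_all add: forward_diff_power)
  also have "\<dots> = (\<Sum>j\<le>N. if j = N then a j * of_nat (fact N) else 0)"
    by (intro sum.cong) auto
  finally show ?thesis by (simp add: mult.commute)
qed

definition additive_subgroup :: "'a::ab_group_add set \<Rightarrow> bool" where
  "additive_subgroup M \<longleftrightarrow> 0 \<in> M \<and> (\<forall>x\<in>M. \<forall>y\<in>M. x - y \<in> M)"

lemma additive_subgroupI:
  "0 \<in> M \<Longrightarrow> (\<And>x y. x \<in> M \<Longrightarrow> y \<in> M \<Longrightarrow> x - y \<in> M) \<Longrightarrow> additive_subgroup M"
  by (simp add: additive_subgroup_def)

context
  fixes M :: "'a::ab_group_add set"
  assumes M: "additive_subgroup M"
begin

lemma additive_subgroup_zero: "0 \<in> M"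
  using M by (simp add: additive_subgroup_def)

lemma additive_subgroup_diff: "x \<in> M \<Longrightarrow> y \<in> M \<Longrightarrow> x - y \<in> M"
  using M by (simp add: additive_subgroup_def)

lemma additive_subgroup_add: "x \<in> M \<Longrightarrow> y \<in> M \<Longrightarrow> x + y \<in> M"
  using additive_subgroup_diff[of x "0 - y"] additive_subgroup_diff[of 0 y] additive_subgroup_zero
  by simp

lemma forward_diff_in_additive_subgroup: "(\<And>t. h t \<in> M) \<Longrightarrow> forward_diff d h t \<in> M"
  by (induction d arbitrary: h t) (simp_all add: additive_subgroup_diff)

end

lemma additive_subgroup_of_nat_mult:
  fixes M :: "'a::comm_ring_1 set"
  assumes "additive_subgroup M" "x \<in> M"
  shows "of_nat n * x \<in> M"
  by (induction n) (simp_all add: assms additive_subgroup_zero additive_subgroup_add distrib_right)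

lemma additive_subgroup_of_nat_cancel:
  fixes M :: "'a::comm_ring_1 set"
  assumes "additive_subgroup M" "of_nat n * x \<in> M" "of_nat m * of_nat n = (1::'a)"
  shows "x \<in> M"
  using additive_subgroup_of_nat_mult[OF assms(1,2), of m] assms(3) by (simp add: mult.assoc[symmetric])

text \<open>Extracting the coefficients of a polynomial curve \<open>t \<mapsto> \<Sum>j\<le>N. t\<^sup>j A\<^sub>j\<close> inside a
  subgroup: the \<open>N\<close>-th difference isolates \<open>N! A\<^sub>N\<close>, which is then removed, and the
  induction continues with the curve of degree \<open>N - 1\<close>.\<close>
lemma additive_subgroup_poly_coeff:
  fixes M :: "'a::comm_ring_1 set"
  assumes "additive_subgroup M" and "of_nat m * of_nat (fact N) = (1::'a)"
    and "\<And>t. (\<Sum>j\<le>N. of_nat t ^ j * A j) \<in> M" and "j \<le> N"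
  shows "A j \<in> M"
  using assms(2-)
proof (induction N arbitrary: m j)
  case 0
  then show ?case using "0.prems"(2)[of 0] by simp
next
  case (Suc N)
  have "forward_diff (Suc N) (\<lambda>t. \<Sum>j\<le>Suc N. of_nat t ^ j * A j) 0 \<in> M"
    by (rule forward_diff_in_additive_subgroup[OF assms(1) Suc.prems(2)])
  then have "of_nat (fact (Suc N)) * A (Suc N) \<in> M"
    by (simp only: forward_diff_poly)
  then have top: "A (Suc N) \<in> M"
    by (rule additive_subgroup_of_nat_cancel[OF assms(1) _ Suc.prems(1)])
  have "(\<Sum>j\<le>N. of_nat t ^ j * A j) \<in> M" for t
  proof -
    have "(\<Sum>j\<le>Suc N. of_nat t ^ j * A j) - of_nat (t ^ Suc N) * A (Suc N) \<in> M"
      by (intro additive_subgroup_diff[OF assms(1)] Suc.prems(2)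
          additive_subgroup_of_nat_mult[OF assms(1) top])
    then show ?thesis by simp
  qed
  moreover have "of_nat (m * Suc N) * of_nat (fact N) = (1::'a)"
    using Suc.prems(1) by (simp add: algebra_simps)
  ultimately show ?case
    using Suc.IH[of "m * Suc N" j] top Suc.prems(3) by (cases "j = Suc N") auto
qed

text \<open>Translation by \<open>1\<close> permutes the ring, so summing \<open>x + 1\<close> over it gives \<open>card \<cdot> 1 = 0\<close>.\<close>
lemma of_nat_CARD_eq_0: "of_nat CARD('a::{finite,ring_1}) = (0::'a)"
proof -
  have "(\<Sum>x\<in>UNIV. x + 1) = (\<Sum>x\<in>(UNIV::'a set). x)"
    by (rule sum.reindex_bij_witness[of _ "\<lambda>x. x - 1" "\<lambda>x. x + 1"]) auto
  then show ?thesis by (simp add: sum.distrib)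
qed

lemma CHAR_eq_prime_of_card:
  assumes "prime p" "CARD('a::{finite,field}) = p ^ e"
  shows "CHAR('a) = p"
proof -
  have "prime CHAR('a)"
    by (intro prime_CHAR_semidom finite_imp_CHAR_pos) simp
  moreover have "CHAR('a) dvd p ^ e"
    using of_nat_CARD_eq_0[where 'a='a] assms(2) of_nat_eq_0_iff_char_dvd by metis
  ultimately show ?thesis
    using assms(1) prime_dvd_power primes_dvd_imp_eq by blast
qed

lemma of_nat_fact_neq_0:
  assumes "n < CHAR('a::{finite,field})"
  shows "of_nat (fact n) \<noteq> (0::'a)"
proof -
  have "prime CHAR('a)"
    by (intro prime_CHAR_semidom finite_imp_CHAR_pos) simp
  then show ?thesis
    using assms by (simp add: of_nat_eq_0_iff_char_dvd prime_dvd_fact_iff)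
qed

text \<open>Multiplication by a nonzero element permutes the finite prime field, so \<open>1\<close> is hit.\<close>
lemma of_nat_inverse_exists:
  assumes "of_nat n \<noteq> (0::'a::{finite,field})"
  obtains m where "of_nat m * of_nat n = (1::'a)"
proof -
  let ?P = "range (of_nat :: nat \<Rightarrow> 'a)"
  have "(\<lambda>x. x * of_nat n) ` ?P = ?P"
    by (rule endo_inj_surj) (auto simp: inj_on_def assms simp flip: of_nat_mult)
  then have "1 \<in> (\<lambda>x. x * of_nat n) ` ?P"
    by (metis of_nat_1 rangeI)
  then show ?thesis using that by auto
qed

lemma sum_fun_apply: "(\<Sum>a\<in>A. f a) x = (\<Sum>a\<in>A. f a x)"
  by (induction A rule: infinite_finite_induct) auto

lemma additive_subgroup_vector_poly_coeff:
  fixes M :: "('i \<Rightarrow> 'a::{finite,field}) set"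
  assumes "additive_subgroup M" and "N < CHAR('a)"
    and "\<And>t. (\<lambda>i. \<Sum>j\<le>N. of_nat t ^ j * A j i) \<in> M" and "j \<le> N"
  shows "A j \<in> M"
proof -
  obtain m where "of_nat m * of_nat (fact N) = (1::'a)"
    using of_nat_inverse_exists of_nat_fact_neq_0[OF assms(2)] by blast
  then have "of_nat m * of_nat (fact N) = (1::'i \<Rightarrow> 'a)"
    by (simp add: fun_eq_iff)
  moreover have "(\<Sum>j\<le>N. of_nat t ^ j * A j) = (\<lambda>i. \<Sum>j\<le>N. of_nat t ^ j * A j i)" for t
    by (simp add: fun_eq_iff sum_fun_apply flip: of_nat_power)
  ultimately show ?thesis
    using additive_subgroup_poly_coeff[OF assms(1)] assms(3,4) by metis
qed

text \<open>The \<open>(j-1)\<close>-st coefficient of \<open>t \<mapsto> (t + x)\<^sup>j w\<close> is \<open>j x w\<close>, and \<open>j\<close> is invertible.\<close>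
lemma additive_subgroup_scalar_mult_of_powers:
  fixes M :: "('i \<Rightarrow> 'a::{finite,field}) set"
  assumes "additive_subgroup M" and "0 < j" "j < CHAR('a)"
    and "\<And>x. (\<lambda>i. x ^ j * w i) \<in> M"
  shows "(\<lambda>i. c * w i) \<in> M"
proof -
  have scaled: "(\<lambda>i. of_nat j * x * w i) \<in> M" for x
  proof -
    have "(\<lambda>i. \<Sum>m\<le>j. of_nat t ^ m * (of_nat (j choose m) * x ^ (j - m) * w i)) \<in> M" for t
    proof -
      have "(of_nat t + x) ^ j = (\<Sum>m\<le>j. of_nat (j choose m) * of_nat t ^ m * x ^ (j - m))"
        by (rule binomial_ring)
      then have "(\<Sum>m\<le>j. of_nat t ^ m * (of_nat (j choose m) * x ^ (j - m) * w i)) = (of_nat t + x) ^ j * w i"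
        for i by (simp add: sum_distrib_left mult_ac)
      then show ?thesis using assms(4)[of "of_nat t + x"] by simp
    qed
    then have "(\<lambda>i. of_nat (j choose (j - 1)) * x ^ (j - (j - 1)) * w i) \<in> M"
      using additive_subgroup_vector_poly_coeff[OF assms(1,3), where j = "j - 1"
          and A = "\<lambda>m i. of_nat (j choose m) * x ^ (j - m) * w i"] by simp
    moreover have "j choose (j - 1) = j" "j - (j - 1) = 1"
      using assms(2) binomial_symmetric[of 1 j] by simp_all
    ultimately show ?thesis by simp
  qed
  have "of_nat j \<noteq> (0::'a)"
    using assms(2,3) by (auto simp: of_nat_eq_0_iff_char_dvd dest: dvd_imp_le)
  then show ?thesis
    using scaled[of "c / of_nat j"] by simp
qed

lemma nonzero_coordinate_if_annihilator_trivial: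
  fixes S :: "('i \<Rightarrow> 'a::field) set"
  assumes "finite I" and "x \<in> I"
    and "\<And>a. (\<And>s. s \<in> S \<Longrightarrow> (\<Sum>i\<in>I. a i * s i) = 0) \<Longrightarrow> \<forall>i\<in>I. a i = 0"
  shows "\<exists>s\<in>S. s x \<noteq> 0"
proof -
  have "(\<Sum>i\<in>I. of_bool (i = x) * s i) = s x" for s :: "'i \<Rightarrow> 'a"
  proof -
    have "(\<Sum>i\<in>I. of_bool (i = x) * s i) = (\<Sum>i\<in>I. if i = x then s i else 0)"
      by (rule sum.cong) auto
    then show ?thesis using assms(1,2) by simp
  qed
  then show ?thesis
    using assms(2) assms(3)[of "\<lambda>i. of_bool (i = x)"] by auto
qed

text \<open>A functional on \<open>I\<close> killing the section \<open>{s \<in> S. s x = 0}\<close> extends, by a suitable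
  value at \<open>x\<close>, to one killing \<open>S\<close>.\<close>
lemma annihilator_trivial_on_coordinate_section:
  fixes S :: "('i \<Rightarrow> 'a::field) set"
  assumes "finite I" and "x \<notin> I" and "s0 \<in> S" and "s0 x \<noteq> 0"
    and pivot: "\<And>s. s \<in> S \<Longrightarrow> (\<lambda>i. s i - s x / s0 x * s0 i) \<in> S"
    and annih: "\<And>b. (\<And>s. s \<in> S \<Longrightarrow> (\<Sum>i\<in>insert x I. b i * s i) = 0) \<Longrightarrow> \<forall>i\<in>insert x I. b i = 0"
    and a: "\<And>s. s \<in> S \<Longrightarrow> s x = 0 \<Longrightarrow> (\<Sum>i\<in>I. a i * s i) = 0"
  shows "\<forall>i\<in>I. a i = 0"
proof -
  define b where "b = a(x := - (\<Sum>i\<in>I. a i * s0 i) / s0 x)"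
  have "(\<Sum>i\<in>insert x I. b i * s i) = 0" if s: "s \<in> S" for s
  proof -
    have "(\<Sum>i\<in>I. a i * (s i - s x / s0 x * s0 i)) = 0"
      using a[OF pivot[OF s]] assms(4) by simp
    then have "(\<Sum>i\<in>I. a i * s i) = (s x / s0 x) * (\<Sum>i\<in>I. a i * s0 i)"
      by (simp add: algebra_simps sum_subtractf sum_distrib_left)
    moreover have "(\<Sum>i\<in>I. b i * s i) = (\<Sum>i\<in>I. a i * s i)"
      using assms(2) by (intro sum.cong) (auto simp: b_def)
    ultimately show ?thesis
      using assms(1,2,4) by (simp add: b_def field_simps)
  qed
  then have "\<forall>i\<in>insert x I. b i = 0" by (rule annih)
  then show ?thesis using assms(2) unfolding b_def by (metis fun_upd_other insertCI)
qed

lemma subspace_contains_supported_vectors: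
  fixes S :: "('i \<Rightarrow> 'a::field) set"
  assumes "finite I"
    and "\<And>s i. s \<in> S \<Longrightarrow> i \<notin> I \<Longrightarrow> s i = 0"
    and "0 \<in> S" and "\<And>v w. v \<in> S \<Longrightarrow> w \<in> S \<Longrightarrow> v + w \<in> S"
    and "\<And>c v. v \<in> S \<Longrightarrow> (\<lambda>i. c * v i) \<in> S"
    and "\<And>a. (\<And>s. s \<in> S \<Longrightarrow> (\<Sum>i\<in>I. a i * s i) = 0) \<Longrightarrow> \<forall>i\<in>I. a i = 0"
    and "\<And>i. i \<notin> I \<Longrightarrow> v i = 0"
  shows "v \<in> S"
  using assms
proof (induction I arbitrary: S v rule: finite_induct)
  case empty
  then have "v = 0" by (auto simp: fun_eq_iff)
  then show ?case using empty.prems(2) by simp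
next
  case (insert x I)
  note supp = insert.prems(1) and add = insert.prems(3) and scale = insert.prems(4)
    and annih = insert.prems(5)
  obtain s0 where s0: "s0 \<in> S" "s0 x \<noteq> 0"
    using nonzero_coordinate_if_annihilator_trivial[OF _ _ annih] insert.hyps(1) by blast
  define pivot where "pivot s = (\<lambda>i. s i - s x / s0 x * s0 i)" for s
  have pivot: "pivot s \<in> S" if "s \<in> S" for s
    using add[OF that scale[OF s0(1), of "- (s x / s0 x)"]] by (simp add: pivot_def plus_fun_def)
  define S' where "S' = {s\<in>S. s x = 0}"
  have "v' \<in> S'" if "\<And>i. i \<notin> I \<Longrightarrow> v' i = 0" for v'
  proof (rule insert.IH)
    show "\<And>s i. s \<in> S' \<Longrightarrow> i \<notin> I \<Longrightarrow> s i = 0"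
      using supp unfolding S'_def by (metis (mono_tags) insertE mem_Collect_eq)
    show "0 \<in> S'" using insert.prems(2) by (simp add: S'_def zero_fun_def)
    show "v + w \<in> S'" if "v \<in> S'" "w \<in> S'" for v w
      using add that by (auto simp: S'_def plus_fun_def)
    show "(\<lambda>i. c * v i) \<in> S'" if "v \<in> S'" for c v
      using scale that by (auto simp: S'_def)
    show "\<forall>i\<in>I. a i = 0" if "\<And>s. s \<in> S' \<Longrightarrow> (\<Sum>i\<in>I. a i * s i) = 0" for a
      using annihilator_trivial_on_coordinate_section[OF insert.hyps s0, of a] pivot annih that
      by (simp add: pivot_def S'_def)
  qed (use that in blast)
  moreover have "pivot v i = 0" if "i \<notin> I" for i
    using supp[OF s0(1)] insert.prems(6) s0(2) that by (cases "i = x") (auto simp: pivot_def)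
  ultimately have "pivot v \<in> S" by (simp add: S'_def)
  then have "pivot v + (\<lambda>i. (v x / s0 x) * s0 i) \<in> S"
    using add scale s0(1) by blast
  then show ?case by (simp add: pivot_def plus_fun_def)
qed

lemma S_vertices_iff: "v \<in> S_vertices k \<longleftrightarrow> (\<forall>i. i \<notin> {1..k} \<longrightarrow> v i = 0)"
  by (auto simp: S_vertices_def not_le)

lemma
  fixes a b :: "nat \<Rightarrow> 'a::ab_group_add"
  shows S_vertices_add: "a \<in> S_vertices k \<Longrightarrow> b \<in> S_vertices k \<Longrightarrow> a + b \<in> S_vertices k"
    and S_vertices_diff: "a \<in> S_vertices k \<Longrightarrow> b \<in> S_vertices k \<Longrightarrow> a - b \<in> S_vertices k"
  by (simp_all add: S_vertices_iff)

definition S_edge :: "nat \<Rightarrow> (nat \<Rightarrow> 'a::field poly) \<Rightarrow> (nat \<Rightarrow> 'a poly) \<Rightarrow> (nat \<Rightarrow> 'a) \<Rightarrow> (nat \<Rightarrow> 'a) \<Rightarrow> bool" where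
  "S_edge k f g x y \<longleftrightarrow> x \<in> S_vertices k \<and> y \<in> S_vertices k \<and> S_adj k f g x y"

lemma S_adj_sym:
  assumes odd: "\<forall>i\<in>{3..k}. pcompose (g i) [:0, -1:] = - g i"
    and "S_adj k f g a b"
  shows "S_adj k f g b a"
proof -
  have "a i - b i = poly (g i) (a 1 - b 1) * poly (f i) ((a 2 - b 2) / (a 1 - b 1))"
    if i: "i \<in> {3..k}" for i
  proof -
    have g: "poly (g i) (a 1 - b 1) = - poly (g i) (b 1 - a 1)"
      using arg_cong[OF odd[rule_format, OF i], of "\<lambda>P. poly P (b 1 - a 1)"]
      by (simp add: poly_pcompose)
    have slope: "(a 2 - b 2) / (a 1 - b 1) = (b 2 - a 2) / (b 1 - a 1)"
      by (metis minus_diff_eq minus_divide_divide)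
    have "b i - a i = poly (g i) (b 1 - a 1) * poly (f i) ((b 2 - a 2) / (b 1 - a 1))"
      using assms(2) i by (simp add: S_adj_def)
    then have "a i - b i = - (poly (g i) (b 1 - a 1) * poly (f i) ((b 2 - a 2) / (b 1 - a 1)))"
      by (metis minus_diff_eq)
    then show ?thesis by (simp only: g slope mult_minus_left)
  qed
  then show ?thesis using assms(2) by (auto simp: S_adj_def)
qed

lemma symp_S_edge:
  assumes "\<forall>i\<in>{3..k}. pcompose (g i) [:0, -1:] = - g i"
  shows "symp (S_edge k f g)"
  using S_adj_sym[OF assms] by (auto intro: sympI simp: S_edge_def)

text \<open>Adjacency only depends on \<open>b - a\<close>: \<open>S(k,q)\<close> is a Cayley graph of \<open>F\<^sub>q\<^sup>k\<close>.\<close>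
definition connecting_translations :: "nat \<Rightarrow> (nat \<Rightarrow> 'a::field poly) \<Rightarrow> (nat \<Rightarrow> 'a poly) \<Rightarrow> (nat \<Rightarrow> 'a) set" where
  "connecting_translations k f g =
     {m \<in> S_vertices k. \<forall>a\<in>S_vertices k. (S_edge k f g)\<^sup>*\<^sup>* a (a + m)}"

lemma additive_subgroup_connecting_translations:
  assumes "\<forall>i\<in>{3..k}. pcompose (g i) [:0, -1:] = - g i"
  shows "additive_subgroup (connecting_translations k f g)"
proof (rule additive_subgroupI)
  show "0 \<in> connecting_translations k f g"
    by (simp add: connecting_translations_def S_vertices_def)
  fix m n assume m: "m \<in> connecting_translations k f g" and n: "n \<in> connecting_translations k f g"
  have "(S_edge k f g)\<^sup>*\<^sup>* a (a + (m - n))" if a: "a \<in> S_vertices k" for a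
  proof -
    have an: "a - n \<in> S_vertices k"
      using a n by (simp add: connecting_translations_def S_vertices_diff)
    have "\<forall>b\<in>S_vertices k. (S_edge k f g)\<^sup>*\<^sup>* b (b + n)"
      using n by (simp add: connecting_translations_def)
    then have "(S_edge k f g)\<^sup>*\<^sup>* (a - n) (a - n + n)"
      using an by (rule bspec)
    then have "(S_edge k f g)\<^sup>*\<^sup>* (a - n) a"
      by simp
    then have "(S_edge k f g)\<^sup>*\<^sup>* a (a - n)"
      by (rule sympD[OF symp_rtranclp[OF symp_S_edge[OF assms]]])
    moreover have "(S_edge k f g)\<^sup>*\<^sup>* (a - n) (a - n + m)"
      using m an by (simp add: connecting_translations_def)
    ultimately show ?thesis by (simp add: algebra_simps)
  qed
  moreover have "m - n \<in> S_vertices k"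
    using m n by (simp add: connecting_translations_def S_vertices_diff)
  ultimately show "m - n \<in> connecting_translations k f g"
    by (simp add: connecting_translations_def)
qed

lemma S_connected_if_all_translations_connect:
  fixes f g :: "nat \<Rightarrow> 'a::field poly"
  assumes "S_vertices k \<subseteq> connecting_translations k f g"
  shows "S_connected k f g"
  unfolding S_connected_def
proof (intro ballI)
  fix a b :: "nat \<Rightarrow> 'a" assume "a \<in> S_vertices k" "b \<in> S_vertices k"
  moreover from this have "b - a \<in> connecting_translations k f g"
    using assms S_vertices_diff by blast
  ultimately have "(S_edge k f g)\<^sup>*\<^sup>* a (a + (b - a))"
    unfolding connecting_translations_def by blast
  then show "(\<lambda>x y. x \<in> S_vertices k \<and> y \<in> S_vertices k \<and> S_adj k f g x y)\<^sup>*\<^sup>* a b"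
    by (simp add: S_edge_def[abs_def])
qed

text \<open>For \<open>c \<noteq> 0\<close> these are the neighbours of the origin; \<open>u\<close> is the slope
  \<open>(b\<^sub>2 - a\<^sub>2) / (b\<^sub>1 - a\<^sub>1)\<close>.\<close>
definition S_step :: "nat \<Rightarrow> (nat \<Rightarrow> 'a::field poly) \<Rightarrow> (nat \<Rightarrow> 'a poly) \<Rightarrow> 'a \<Rightarrow> 'a \<Rightarrow> nat \<Rightarrow> 'a" where
  "S_step k f g c u = (\<lambda>i. if i = 1 then c else if i = 2 then c * u
     else if i \<in> {3..k} then poly (g i) c * poly (f i) u else 0)"

lemma S_step_in_connecting_translations:
  assumes "3 \<le> k" and "\<forall>i\<in>{3..k}. coeff (g i) 0 = 0"
  shows "S_step k f g c u \<in> connecting_translations k f g"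
proof (cases "c = 0")
  case True
  then have "S_step k f g c u = 0"
    using assms(2) by (auto simp: S_step_def fun_eq_iff poly_0_coeff_0)
  then show ?thesis by (simp add: connecting_translations_def S_vertices_def)
next
  case False
  have step: "S_step k f g c u \<in> S_vertices k"
    using assms(1) by (auto simp: S_step_def S_vertices_iff)
  have "S_adj k f g a (a + S_step k f g c u)" for a
    using False by (simp add: S_adj_def S_step_def)
  then have "S_edge k f g a (a + S_step k f g c u)" if "a \<in> S_vertices k" for a
    using that step by (simp add: S_edge_def S_vertices_add)
  then show ?thesis using step by (auto simp: connecting_translations_def)
qed

definition coeff_vector :: "nat \<Rightarrow> (nat \<Rightarrow> 'a::field poly) \<Rightarrow> (nat \<Rightarrow> 'a poly) \<Rightarrow> nat \<Rightarrow> 'a \<Rightarrow> nat \<Rightarrow> 'a" where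
  "coeff_vector k f g j u = (\<lambda>i. if i = 1 then of_bool (j = 1) else if i = 2 then of_bool (j = 1) * u
     else if i \<in> {3..k} then coeff (g i) j * poly (f i) u else 0)"

lemma poly_eq_sum_coeff_upto:
  fixes p :: "'a::comm_semiring_1 poly"
  assumes "degree p \<le> D"
  shows "poly p c = (\<Sum>j\<le>D. coeff p j * c ^ j)"
proof -
  have "poly p c = (\<Sum>j\<le>degree p. coeff p j * c ^ j)" by (rule poly_altdef)
  also have "\<dots> = (\<Sum>j\<le>D. coeff p j * c ^ j)"
    by (rule sum.mono_neutral_left) (use assms in \<open>auto simp: coeff_eq_0\<close>)
  finally show ?thesis .
qed

lemma S_step_expansion:
  assumes "1 \<le> D" and "\<forall>i\<in>{3..k}. degree (g i) \<le> D"
  shows "S_step k f g c u = (\<lambda>i. \<Sum>j\<le>D. c ^ j * coeff_vector k f g j u i)"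
proof
  fix i
  have delta: "(\<Sum>j\<le>D. c ^ j * of_bool (j = 1)) = c"
  proof -
    have "(\<Sum>j\<le>D. c ^ j * of_bool (j = 1)) = (\<Sum>j\<le>D. if j = 1 then c else 0)"
      by (rule sum.cong) auto
    then show ?thesis using assms(1) by simp
  qed
  consider "i = 1" | "i = 2" | "i \<in> {3..k}" | "i \<notin> {1, 2} \<union> {3..k}"
    by blast
  then show "S_step k f g c u i = (\<Sum>j\<le>D. c ^ j * coeff_vector k f g j u i)"
  proof cases
    case 2
    have "(\<Sum>j\<le>D. c ^ j * (of_bool (j = 1) * u)) = (\<Sum>j\<le>D. c ^ j * of_bool (j = 1)) * u"
      by (subst sum_distrib_right) (simp only: mult.assoc)
    then show ?thesis using 2 delta by (simp add: S_step_def coeff_vector_def)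
  next
    case 3
    then have "poly (g i) c = (\<Sum>j\<le>D. coeff (g i) j * c ^ j)"
      using assms(2) poly_eq_sum_coeff_upto by blast
    then show ?thesis
      using 3 by (simp add: S_step_def coeff_vector_def sum_distrib_left mult_ac)
  qed (use delta in \<open>auto simp: S_step_def coeff_vector_def\<close>)
qed

lemma coeff_vector_scalar_mult_in_connecting_translations:
  fixes f g :: "nat \<Rightarrow> 'a::{finite,field} poly"
  assumes "3 \<le> k"
    and odd: "\<forall>i\<in>{3..k}. pcompose (g i) [:0, -1:] = - g i"
    and "\<forall>i\<in>{3..k}. coeff (g i) 0 = 0"
    and "\<forall>i\<in>{3..k}. degree (g i) \<le> D" and "D < CHAR('a)"
    and "0 < j" "j \<le> D"
  shows "(\<lambda>i. c * coeff_vector k f g j u i) \<in> connecting_translations k f g"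
proof -
  let ?M = "connecting_translations k f g"
  have M: "additive_subgroup ?M"
    by (rule additive_subgroup_connecting_translations[OF odd])
  have "(\<lambda>i. x ^ j * coeff_vector k f g j u i) \<in> ?M" for x
  proof (rule additive_subgroup_vector_poly_coeff[OF M assms(5) _ assms(7),
        where A = "\<lambda>j i. x ^ j * coeff_vector k f g j u i"])
    fix t
    have "(\<lambda>i. \<Sum>j\<le>D. of_nat t ^ j * (x ^ j * coeff_vector k f g j u i)) = S_step k f g (of_nat t * x) u"
      using S_step_expansion[of D k g f "of_nat t * x" u] assms(4,6,7)
      by (simp add: power_mult_distrib mult_ac)
    then show "(\<lambda>i. \<Sum>j\<le>D. of_nat t ^ j * (x ^ j * coeff_vector k f g j u i)) \<in> ?M"
      using S_step_in_connecting_translations[OF assms(1,3)] by simp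
  qed
  then show ?thesis
    using additive_subgroup_scalar_mult_of_powers[OF M assms(6)] assms(5,7) by simp
qed

lemma S_connected_if_coeff_vectors_nondegenerate:
  fixes f g :: "nat \<Rightarrow> 'a::{finite,field} poly"
  assumes "3 \<le> k"
    and odd: "\<forall>i\<in>{3..k}. pcompose (g i) [:0, -1:] = - g i"
    and "\<forall>i\<in>{3..k}. coeff (g i) 0 = 0"
    and "\<forall>i\<in>{3..k}. degree (g i) \<le> D" and "D < CHAR('a)"
    and "J \<subseteq> {1..D}"
    and nondegenerate: "\<And>a. \<forall>j\<in>J. \<forall>u. (\<Sum>i\<in>{1..k}. a i * coeff_vector k f g j u i) = 0
      \<Longrightarrow> \<forall>i\<in>{1..k}. a i = 0"
  shows "S_connected k f g"
proof -
  let ?M = "connecting_translations k f g"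
  have M: "additive_subgroup ?M"
    by (rule additive_subgroup_connecting_translations[OF odd])
  define T where "T = {v \<in> S_vertices k. \<forall>c. (\<lambda>i. c * v i) \<in> ?M}"
  have "coeff_vector k f g j u \<in> S_vertices k" for j u
    using assms(1) by (auto simp: S_vertices_iff coeff_vector_def)
  moreover have "0 < j" "j \<le> D" if "j \<in> J" for j
    using that assms(6) by auto
  ultimately have coeff_vector_in_T: "coeff_vector k f g j u \<in> T" if "j \<in> J" for j u
    using coeff_vector_scalar_mult_in_connecting_translations[OF assms(1-5)] that
    by (simp add: T_def)
  have "S_vertices k \<subseteq> T"
  proof
    fix v :: "nat \<Rightarrow> 'a" assume v: "v \<in> S_vertices k"
    show "v \<in> T"
    proof (rule subspace_contains_supported_vectors[of "{1..k}" T])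
      show "0 \<in> T"
        using additive_subgroup_zero[OF M] by (simp add: T_def S_vertices_iff zero_fun_def)
      show "v + w \<in> T" if "v \<in> T" "w \<in> T" for v w :: "nat \<Rightarrow> 'a"
        using that additive_subgroup_add[OF M] S_vertices_add
        by (auto simp: T_def plus_fun_def distrib_left)
      show "(\<lambda>i. c * v i) \<in> T" if "v \<in> T" for c and v :: "nat \<Rightarrow> 'a"
        using that by (auto simp: T_def S_vertices_iff mult.assoc[symmetric])
      show "\<forall>i\<in>{1..k}. a i = 0" if "\<And>s. s \<in> T \<Longrightarrow> (\<Sum>i\<in>{1..k}. a i * s i) = 0" for a :: "nat \<Rightarrow> 'a"
        using nondegenerate that coeff_vector_in_T by blast
      show "s i = 0" if "s \<in> T" "i \<notin> {1..k}" for s i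
        using that by (simp add: T_def S_vertices_iff)
      show "v i = 0" if "i \<notin> {1..k}" for i
        using v that by (simp add: S_vertices_iff)
    qed simp
  qed
  then have "S_vertices k \<subseteq> ?M"
  proof (intro subsetI)
    fix v :: "nat \<Rightarrow> 'a" assume "v \<in> S_vertices k"
    with \<open>S_vertices k \<subseteq> T\<close> have "(\<lambda>i. 1 * v i) \<in> ?M"
      unfolding T_def by blast
    then show "v \<in> ?M" by simp
  qed
  then show ?thesis by (rule S_connected_if_all_translations_connect)
qed

lemma poly_eq_0_if_vanishes:
  fixes P :: "'a::{finite,field} poly"
  assumes "\<And>x. poly P x = 0" and "degree P < CARD('a)"
  shows "P = 0"
proof (rule ccontr)
  assume "P \<noteq> 0"
  then have "card {x. poly P x = 0} \<le> degree P" by (rule card_poly_roots_bound)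
  then show False using assms by simp
qed

lemma CARD_field_ge_2: "2 \<le> CARD('a::{finite,field})"
proof -
  have "card {0, 1 :: 'a} \<le> CARD('a)" by (rule card_mono) simp_all
  then show ?thesis by simp
qed

lemma degree_sum_smult_less_CARD:
  fixes f :: "nat \<Rightarrow> 'a::{finite,field} poly"
  assumes "\<forall>i\<in>I. degree (f i) \<le> CARD('a) - 1"
  shows "degree (\<Sum>i\<in>I. smult (c i) (f i)) < CARD('a)"
proof (cases "finite I")
  case True
  then have "degree (\<Sum>i\<in>I. smult (c i) (f i)) \<le> CARD('a) - 1"
    using assms by (intro degree_sum_le) (auto intro: order.trans[OF degree_smult_le])
  then show ?thesis using CARD_field_ge_2[where 'a='a] by linarith
qed simp

lemma atLeastAtMost_1_eq_insert_2: "2 \<le> k \<Longrightarrow> {1..k} = insert 1 (insert 2 {3..k::nat})"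
  by auto

lemma sum_coeff_vector:
  assumes "3 \<le> k"
  shows "(\<Sum>i\<in>{1..k}. a i * coeff_vector k f g j u i)
    = of_bool (j = 1) * (a 1 + a 2 * u) + poly (\<Sum>i\<in>{3..k}. smult (a i * coeff (g i) j) (f i)) u"
proof -
  have "{1..k} = insert 1 (insert 2 {3..k})" using assms atLeastAtMost_1_eq_insert_2[of k] by simp
  moreover have "(\<Sum>i\<in>{3..k}. a i * coeff_vector k f g j u i)
      = poly (\<Sum>i\<in>{3..k}. smult (a i * coeff (g i) j) (f i)) u"
    by (auto simp: poly_sum coeff_vector_def mult.assoc intro: sum.cong)
  ultimately show ?thesis by (simp add: coeff_vector_def algebra_simps)
qed

lemma coeff_vectors_nondegenerate_linear:
  fixes f g :: "nat \<Rightarrow> 'a::{finite,field} poly"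
  assumes "3 \<le> k" and "lin_indep_1_X_f k f" and "\<forall>i\<in>{3..k}. coeff (g i) 1 \<noteq> 0"
    and "\<forall>i\<in>{3..k}. degree (f i) \<le> CARD('a) - 1"
    and "\<forall>u. (\<Sum>i\<in>{1..k}. a i * coeff_vector k f g 1 u i) = 0"
  shows "\<forall>i\<in>{1..k}. a i = 0"
proof -
  define P where "P = smult (a 1) 1 + smult (a 2) [:0, 1:]
    + (\<Sum>i\<in>{3..k}. smult (a i * coeff (g i) 1) (f i))"
  have "poly P u = 0" for u
    using assms(5) sum_coeff_vector[OF assms(1), of a f g 1 u] by (simp add: P_def algebra_simps)
  moreover have "degree P < CARD('a)"
    unfolding P_def using CARD_field_ge_2[where 'a='a]
      degree_sum_smult_less_CARD[OF assms(4), of "\<lambda>i. a i * coeff (g i) 1"]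
    by (intro degree_add_less) (auto intro: le_less_trans[OF degree_smult_le])
  ultimately have "P = 0" by (rule poly_eq_0_if_vanishes)
  then have "a 1 = 0 \<and> a 2 = 0 \<and> (\<forall>i\<in>{3..k}. a i * coeff (g i) 1 = 0)"
    using assms(2)[unfolded lin_indep_1_X_f_def, rule_format, of "a 1" "a 2" "\<lambda>i. a i * coeff (g i) 1"]
    by (simp add: P_def)
  then show ?thesis using assms(1,3) atLeastAtMost_1_eq_insert_2[of k] by simp
qed

lemma coeff_vectors_nondegenerate_higher:
  fixes f g :: "nat \<Rightarrow> 'a::{finite,field} poly"
  assumes "3 \<le> k" and "lin_indep_f k f" and "j \<noteq> 1" and "\<forall>i\<in>{3..k}. coeff (g i) j \<noteq> 0"
    and "\<forall>i\<in>{3..k}. degree (f i) \<le> CARD('a) - 1"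
    and "\<forall>u. (\<Sum>i\<in>{1..k}. a i * coeff_vector k f g 1 u i) = 0"
    and "\<forall>u. (\<Sum>i\<in>{1..k}. a i * coeff_vector k f g j u i) = 0"
  shows "\<forall>i\<in>{1..k}. a i = 0"
proof -
  define P where "P = (\<Sum>i\<in>{3..k}. smult (a i * coeff (g i) j) (f i))"
  have "poly P u = 0" for u
    using assms(3,7) sum_coeff_vector[OF assms(1), of a f g j u] by (simp add: P_def)
  then have "P = 0"
    using degree_sum_smult_less_CARD[OF assms(5)] by (intro poly_eq_0_if_vanishes) (simp_all add: P_def)
  then have "\<forall>i\<in>{3..k}. a i * coeff (g i) j = 0"
    using assms(2)[unfolded lin_indep_f_def, rule_format, of "\<lambda>i. a i * coeff (g i) j"]
    by (simp add: P_def)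
  then have high: "\<forall>i\<in>{3..k}. a i = 0" using assms(4) by simp
  then have "a 1 + a 2 * u = 0" for u
    using assms(6) sum_coeff_vector[OF assms(1), of a f g 1 u] by simp
  from this[of 0] this[of 1] have "a 1 = 0" "a 2 = 0" by simp_all
  then show ?thesis using high assms(1) atLeastAtMost_1_eq_insert_2[of k] by simp
qed

theorem mainTheorem9:
  fixes k p e :: nat
    and f g :: "nat \<Rightarrow> 'a::{finite, field} poly"
  assumes "k \<ge> 3"
    and "prime p" and "e \<ge> 1" and "CARD('a) = p ^ e"
    and "\<forall>i\<in>{3..k}. degree (f i) \<le> CARD('a) - 1 \<and> degree (g i) \<le> CARD('a) - 1"
    and "\<forall>i\<in>{3..k}. pcompose (g i) [:0, -1:] = - g i"
    and "\<forall>i\<in>{3..k}. coeff (g i) 0 = 0"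
    and "1 \<le> d_g k g" and "d_g k g < p"
    and "(lin_indep_1_X_f k f \<and> (\<forall>i\<in>{3..k}. coeff (g i) 1 \<noteq> 0)) \<or>
         (lin_indep_f k f \<and> (\<exists>j. 2 \<le> j \<and> j \<le> d_g k g \<and> (\<forall>i\<in>{3..k}. coeff (g i) j \<noteq> 0)))"
  shows "S_connected k f g"
proof -
  have deg_g: "\<forall>i\<in>{3..k}. degree (g i) \<le> d_g k g"
    unfolding d_g_def by (auto intro: Max_ge)
  have "d_g k g < CHAR('a)"
    using CHAR_eq_prime_of_card[OF assms(2,4)] assms(9) by simp
  note connected = S_connected_if_coeff_vectors_nondegenerate[OF assms(1,6,7) deg_g this]
  have deg_f: "\<forall>i\<in>{3..k}. degree (f i) \<le> CARD('a) - 1"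
    using assms(5) by blast
  from assms(10) show ?thesis
  proof (elim disjE conjE exE)
    assume "lin_indep_1_X_f k f" "\<forall>i\<in>{3..k}. coeff (g i) 1 \<noteq> 0"
    then show ?thesis
      using coeff_vectors_nondegenerate_linear[OF assms(1) _ _ deg_f] assms(8)
      by (intro connected[of "{1}"]) auto
  next
    fix j assume j: "lin_indep_f k f" "2 \<le> j" "j \<le> d_g k g" "\<forall>i\<in>{3..k}. coeff (g i) j \<noteq> 0"
    then show ?thesis
      using coeff_vectors_nondegenerate_higher[OF assms(1) j(1) _ j(4) deg_f] assms(8)
      by (intro connected[of "{1, j}"]) auto
  qed
qed

end
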